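(* Let $d,r\in\mathbb{N}$, $n\geq 3$, and let $k$ be a nonnegative integer with $$k\leq \left(1+\binom{2(d+1)}{r-1}\right)^{-1}\left(\frac n2-1\right)-d-5.$$ Let $G$ and $H$ be graphs on $n$ vertices, each with average degree at most $d$. Suppose there are distinct vertices $u_1,\dots,u_{n-k}$ of $G$ and distinct vertices $w_1,\dots,w_{n-k}$ of $H$ such that $G-u_i\cong H-w_i$ for every $i\in[n-k]$. Then $G$ and $H$ contain the same number of cliques of size $r$. (That is, the number of $r$-cliques can be reconstructed from any deck missing at most the stated number of cards.)
   Context: All graphs are finite, simple and undirected. For a graph $G$ and $v\in V(G)$, the card $G-v$ is the graph obtained by deleting $v$ and all edges incident to it; the deck is the multiset of unlabelled cards. An $r$-clique is a set of $r$ pairwise adjacent vertices. The average degree of an $n$-vertex graph with $m$ edges is $2m/n$. *)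

theory Defs
  imports Complex_Main
begin

definition simple_graph :: "'a set \<Rightarrow> 'a set set \<Rightarrow> bool" where
  "simple_graph V E \<longleftrightarrow> finite V \<and> (\<forall>e\<in>E. e \<subseteq> V \<and> card e = 2)"

definition del_vert_V :: "'a set \<Rightarrow> 'a \<Rightarrow> 'a set" where
  "del_vert_V V v = V - {v}"

definition del_vert_E :: "'a set set \<Rightarrow> 'a \<Rightarrow> 'a set set" where
  "del_vert_E E v = {e \<in> E. v \<notin> e}"

definition graph_iso :: "'a set \<Rightarrow> 'a set set \<Rightarrow> 'b set \<Rightarrow> 'b set set \<Rightarrow> bool" where
  "graph_iso V1 E1 V2 E2 \<longleftrightarrow>
     (\<exists>f. bij_betw f V1 V2 \<and>
          (\<forall>x\<in>V1. \<forall>y\<in>V1. {x, y} \<in> E1 \<longleftrightarrow> {f x, f y} \<in> E2))"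

definition cliques :: "nat \<Rightarrow> 'a set \<Rightarrow> 'a set set \<Rightarrow> 'a set set" where
  "cliques r V E = {S. S \<subseteq> V \<and> card S = r \<and> (\<forall>x\<in>S. \<forall>y\<in>S. x \<noteq> y \<longrightarrow> {x, y} \<in> E)}"

definition avg_degree :: "'a set \<Rightarrow> 'a set set \<Rightarrow> real" where
  "avg_degree V E = 2 * real (card E) / real (card V)"

end

theory Submission
  imports Defs
begin

text \<open>
  Suppose \<open>G\<close> had \<open>\<Delta> > 0\<close> more \<open>r\<close>-cliques than \<open>H\<close>. Deleting a vertex destroys exactly the
  cliques through it, so on every available card \<open>G - u\<^sub>i \<cong> H - w\<^sub>i\<close> the vertex \<open>u\<^sub>i\<close> lies in
  exactly \<open>\<Delta>\<close> more \<open>r\<close>-cliques of \<open>G\<close> than \<open>w\<^sub>i\<close> does of \<open>H\<close>. Let \<open>f t\<close> count the cards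
  whose vertex lies in at least \<open>t\<close> cliques of \<open>G\<close>. Comparing \<open>G\<close> and \<open>H\<close> through one card
  whose vertex \<open>u\<^sub>i\<close> has at most \<open>d + 4\<close> clique neighbours (such a card exists by the degree
  bound) gives \<open>f t \<le> f (t + \<Delta>) + k + d + 5\<close>: the loss comes from the \<open>k\<close> missing cards, from
  \<open>u\<^sub>i\<close> and from its clique neighbours. Iterating \<open>C = (2(d+1) choose (r-1))\<close> times yields
  \<open>n - k \<le> f (C + 1) + C (k + d + 5)\<close>. But a vertex in more than \<open>C\<close> cliques has degree above
  \<open>2(d+1)\<close>, and by the average degree bound fewer than \<open>n/2\<close> vertices do; this contradicts
  the bound on \<open>k\<close>.
\<close>

definition clique_degree :: "nat \<Rightarrow> 'a set \<Rightarrow> 'a set set \<Rightarrow> 'a \<Rightarrow> nat" where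
  "clique_degree r V E x = card {S \<in> cliques r V E. x \<in> S}"

definition heavy_vertices :: "nat \<Rightarrow> 'a set \<Rightarrow> 'a set set \<Rightarrow> nat \<Rightarrow> 'a set" where
  "heavy_vertices r V E t = {x \<in> V. t \<le> clique_degree r V E x}"

definition neighbours :: "'a set \<Rightarrow> 'a set set \<Rightarrow> 'a \<Rightarrow> 'a set" where
  "neighbours V E x = {y \<in> V. {x, y} \<in> E}"

definition vertex_degree :: "'a set set \<Rightarrow> 'a \<Rightarrow> nat" where
  "vertex_degree E x = card {e \<in> E. x \<in> e}"

definition clique_neighbours :: "nat \<Rightarrow> 'a set \<Rightarrow> 'a set set \<Rightarrow> 'a \<Rightarrow> 'a set" where
  "clique_neighbours r V E x = {y \<in> V. y \<noteq> x \<and> (\<exists>S\<in>cliques r V E. x \<in> S \<and> y \<in> S)}"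

section \<open>Cliques under vertex deletion\<close>

lemma finite_cliques: "finite V \<Longrightarrow> finite (cliques r V E)"
  by (rule finite_subset[of _ "Pow V"]) (auto simp: cliques_def)

lemma finite_edges: "simple_graph V E \<Longrightarrow> finite E"
  unfolding simple_graph_def by (meson Pow_iff finite_Pow_iff finite_subset subsetI)

lemma cliques_del_vert:
  "cliques r (del_vert_V V u) (del_vert_E E u) = {S \<in> cliques r V E. u \<notin> S}"
  unfolding cliques_def del_vert_V_def del_vert_E_def by auto

lemma card_cliques_del_vert:
  assumes "finite V"
  shows "card (cliques r (del_vert_V V u) (del_vert_E E u)) + clique_degree r V E u
           = card (cliques r V E)"
proof -
  have "cliques r V E = {S \<in> cliques r V E. u \<notin> S} \<union> {S \<in> cliques r V E. u \<in> S}"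
    by auto
  then show ?thesis
    using finite_cliques[OF assms]
    by (simp add: cliques_del_vert clique_degree_def card_Un_disjoint[symmetric] disjoint_iff)
qed

lemma clique_degree_del_vert_le:
  assumes "finite V"
  shows "clique_degree r (del_vert_V V u) (del_vert_E E u) x \<le> clique_degree r V E x"
  unfolding clique_degree_def cliques_del_vert
  by (rule card_mono) (use finite_cliques[OF assms] in auto)

lemma clique_degree_del_vert_eq:
  assumes "x \<in> V" "x \<noteq> u" "x \<notin> clique_neighbours r V E u"
  shows "clique_degree r (del_vert_V V u) (del_vert_E E u) x = clique_degree r V E x"
proof -
  have "{S \<in> {S \<in> cliques r V E. u \<notin> S}. x \<in> S} = {S \<in> cliques r V E. x \<in> S}"
    using assms by (auto simp: clique_neighbours_def)
  then show ?thesis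
    unfolding clique_degree_def cliques_del_vert by simp
qed

lemma card_heavy_vertices_del_vert_le:
  assumes "finite V"
  shows "card (heavy_vertices r (del_vert_V V u) (del_vert_E E u) t) \<le> card (heavy_vertices r V E t)"
  unfolding heavy_vertices_def
  by (rule card_mono)
     (use assms clique_degree_del_vert_le[OF assms] in \<open>auto simp: del_vert_V_def intro: le_trans\<close>)

text \<open>Deleting \<open>u\<close> only lowers the clique degrees of \<open>u\<close> and of its clique neighbours.\<close>

lemma card_heavy_vertices_le_del_vert:
  assumes "finite V"
  shows "card (heavy_vertices r V E t)
           \<le> card (heavy_vertices r (del_vert_V V u) (del_vert_E E u) t)
             + card (clique_neighbours r V E u) + 1"
proof -
  let ?A = "heavy_vertices r (del_vert_V V u) (del_vert_E E u) t"
  let ?K = "clique_neighbours r V E u"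
  have fin: "finite ?A" "finite ?K"
    using assms by (auto simp: heavy_vertices_def del_vert_V_def clique_neighbours_def)
  have "heavy_vertices r V E t \<subseteq> ?A \<union> ?K \<union> {u}"
    using clique_degree_del_vert_eq by (fastforce simp: heavy_vertices_def del_vert_V_def)
  then have "card (heavy_vertices r V E t) \<le> card (?A \<union> ?K \<union> {u})"
    using fin by (intro card_mono) auto
  also have "\<dots> \<le> card ?A + card ?K + 1"
    using card_Un_le[of ?A ?K] card_Un_le[of "?A \<union> ?K" "{u}"] by simp
  finally show ?thesis .
qed

section \<open>Invariance under isomorphism\<close>

lemma graph_iso_sym:
  assumes "graph_iso V1 E1 V2 E2"
  shows "graph_iso V2 E2 V1 E1"
proof -
  obtain f where f: "bij_betw f V1 V2"
    and e: "\<forall>x\<in>V1. \<forall>y\<in>V1. {x, y} \<in> E1 \<longleftrightarrow> {f x, f y} \<in> E2"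
    using assms by (auto simp: graph_iso_def)
  let ?g = "inv_into V1 f"
  have g: "bij_betw ?g V2 V1"
    using f by (rule bij_betw_inv_into)
  have "?g z \<in> V1" "f (?g z) = z" if "z \<in> V2" for z
    using f g that by (auto simp: bij_betw_apply bij_betw_inv_into_right)
  then have "\<forall>x\<in>V2. \<forall>y\<in>V2. {x, y} \<in> E2 \<longleftrightarrow> {?g x, ?g y} \<in> E1"
    using e by metis
  then show ?thesis
    using g by (auto simp: graph_iso_def)
qed

lemma cliques_image_iso:
  assumes f: "bij_betw f V1 V2"
    and e: "\<forall>x\<in>V1. \<forall>y\<in>V1. {x, y} \<in> E1 \<longleftrightarrow> {f x, f y} \<in> E2"
  shows "cliques r V2 E2 = image f ` cliques r V1 E1"
proof
  have inj: "inj_on f V1" and im: "f ` V1 = V2"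
    using f by (auto simp: bij_betw_def)
  show "image f ` cliques r V1 E1 \<subseteq> cliques r V2 E2"
  proof
    fix T assume "T \<in> image f ` cliques r V1 E1"
    then obtain S where S: "S \<in> cliques r V1 E1" and T: "T = f ` S" by auto
    have sub: "S \<subseteq> V1" using S by (auto simp: cliques_def)
    have "card T = card S" using T inj sub by (simp add: card_image inj_on_subset)
    moreover have "\<forall>a\<in>T. \<forall>b\<in>T. a \<noteq> b \<longrightarrow> {a, b} \<in> E2"
      using S T e sub by (auto simp: cliques_def) (metis subsetD)
    ultimately show "T \<in> cliques r V2 E2" using S T sub im by (auto simp: cliques_def)
  qed
  show "cliques r V2 E2 \<subseteq> image f ` cliques r V1 E1"
  proof
    fix T assume T: "T \<in> cliques r V2 E2"
    define S where "S = {x \<in> V1. f x \<in> T}"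
    have sub: "S \<subseteq> V1" by (auto simp: S_def)
    have fS: "f ` S = T" using T im unfolding S_def cliques_def by auto
    have "card S = card T" using fS inj sub by (metis card_image inj_on_subset)
    moreover have "{x, y} \<in> E1" if "x \<in> S" "y \<in> S" "x \<noteq> y" for x y
    proof -
      have "f x \<noteq> f y" "f x \<in> T" "f y \<in> T" "x \<in> V1" "y \<in> V1"
        using that inj by (auto simp: S_def inj_on_def)
      then show ?thesis using T e by (auto simp: cliques_def)
    qed
    ultimately have "S \<in> cliques r V1 E1" using sub T by (auto simp: cliques_def)
    then show "T \<in> image f ` cliques r V1 E1" using fS by auto
  qed
qed

lemma inj_on_image_cliques:
  assumes "inj_on f V"
  shows "inj_on (image f) (cliques r V E)"
  by (rule inj_on_subset[OF inj_on_image_Pow[OF assms]]) (auto simp: cliques_def)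

lemma clique_degree_iso:
  assumes f: "bij_betw f V1 V2"
    and e: "\<forall>x\<in>V1. \<forall>y\<in>V1. {x, y} \<in> E1 \<longleftrightarrow> {f x, f y} \<in> E2"
    and x: "x \<in> V1"
  shows "clique_degree r V2 E2 (f x) = clique_degree r V1 E1 x"
proof -
  have inj: "inj_on f V1"
    using f by (rule bij_betw_imp_inj_on)
  have "f x \<in> f ` S \<longleftrightarrow> x \<in> S" if "S \<in> cliques r V1 E1" for S
    using that inj x by (auto simp: cliques_def inj_on_def)
  then have "{S \<in> cliques r V2 E2. f x \<in> S} = image f ` {S \<in> cliques r V1 E1. x \<in> S}"
    using cliques_image_iso[OF f e] by auto
  moreover have "inj_on (image f) {S \<in> cliques r V1 E1. x \<in> S}"
    using inj_on_image_cliques[OF inj] by (rule inj_on_subset) auto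
  ultimately show ?thesis
    by (simp add: clique_degree_def card_image)
qed

lemma graph_iso_card_cliques:
  assumes "graph_iso V1 E1 V2 E2"
  shows "card (cliques r V1 E1) = card (cliques r V2 E2)"
proof -
  obtain f where f: "bij_betw f V1 V2"
    and e: "\<forall>x\<in>V1. \<forall>y\<in>V1. {x, y} \<in> E1 \<longleftrightarrow> {f x, f y} \<in> E2"
    using assms by (auto simp: graph_iso_def)
  show ?thesis
    using cliques_image_iso[OF f e] inj_on_image_cliques[OF bij_betw_imp_inj_on[OF f]]
    by (simp add: card_image)
qed

lemma graph_iso_card_heavy_vertices:
  assumes "graph_iso V1 E1 V2 E2"
  shows "card (heavy_vertices r V1 E1 t) = card (heavy_vertices r V2 E2 t)"
proof -
  obtain f where f: "bij_betw f V1 V2"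
    and e: "\<forall>x\<in>V1. \<forall>y\<in>V1. {x, y} \<in> E1 \<longleftrightarrow> {f x, f y} \<in> E2"
    using assms by (auto simp: graph_iso_def)
  have "heavy_vertices r V2 E2 t = f ` heavy_vertices r V1 E1 t"
    using bij_betw_imp_surj_on[OF f] clique_degree_iso[OF f e]
    by (auto simp: heavy_vertices_def)
  moreover have "inj_on f (heavy_vertices r V1 E1 t)"
    using bij_betw_imp_inj_on[OF f] by (rule inj_on_subset) (auto simp: heavy_vertices_def)
  ultimately show ?thesis
    by (simp add: card_image)
qed

section \<open>Clique degrees and vertex degrees\<close>

lemma clique_minus_subset_neighbours:
  assumes "S \<in> cliques r V E" "x \<in> S" "finite V"
  shows "S - {x} \<subseteq> neighbours V E x" "card (S - {x}) = r - 1"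
proof -
  have "finite S" using assms by (auto simp: cliques_def intro: finite_subset)
  then show "card (S - {x}) = r - 1" using assms by (auto simp: cliques_def)
  show "S - {x} \<subseteq> neighbours V E x" using assms by (auto simp: cliques_def neighbours_def)
qed

lemma clique_degree_le_choose:
  assumes "finite V"
  shows "clique_degree r V E x \<le> card (neighbours V E x) choose (r - 1)"
proof -
  have "card {S \<in> cliques r V E. x \<in> S} \<le> card {B. B \<subseteq> neighbours V E x \<and> card B = r - 1}"
  proof (rule card_inj_on_le[where f = "\<lambda>S. S - {x}"])
    show "inj_on (\<lambda>S. S - {x}) {S \<in> cliques r V E. x \<in> S}"
      by (rule inj_onI) (metis (no_types, lifting) insert_Diff mem_Collect_eq)
    show "(\<lambda>S. S - {x}) ` {S \<in> cliques r V E. x \<in> S} \<subseteq> {B. B \<subseteq> neighbours V E x \<and> card B = r - 1}"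
    proof
      fix B assume "B \<in> (\<lambda>S. S - {x}) ` {S \<in> cliques r V E. x \<in> S}"
      then obtain S where S: "S \<in> cliques r V E" "x \<in> S" and B: "B = S - {x}"
        by auto
      show "B \<in> {B. B \<subseteq> neighbours V E x \<and> card B = r - 1}"
        using clique_minus_subset_neighbours[OF S assms] B by simp
    qed
    show "finite {B. B \<subseteq> neighbours V E x \<and> card B = r - 1}"
      using assms by (auto simp: neighbours_def)
  qed
  also have "\<dots> = card (neighbours V E x) choose (r - 1)"
    by (rule n_subsets) (use assms in \<open>auto simp: neighbours_def\<close>)
  finally show ?thesis by (simp add: clique_degree_def)
qed

lemma card_cliques_trivial:
  assumes "finite V" "r \<le> 1"
  shows "card (cliques r V E) = (if r = 0 then 1 else card V)"
proof (cases "r = 0")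
  case True
  then have "cliques r V E = {{}}"
    using assms(1) by (auto simp: cliques_def dest: finite_subset)
  then show ?thesis
    using True by simp
next
  case False
  then have r: "r = 1"
    using assms(2) by simp
  have "cliques r V E = (\<lambda>x. {x}) ` V"
  proof
    show "cliques r V E \<subseteq> (\<lambda>x. {x}) ` V"
    proof
      fix S assume S: "S \<in> cliques r V E"
      then have "card S = 1"
        using r by (simp add: cliques_def)
      then obtain y where "S = {y}"
        by (rule card_1_singletonE)
      then show "S \<in> (\<lambda>x. {x}) ` V"
        using S by (auto simp: cliques_def)
    qed
    show "(\<lambda>x. {x}) ` V \<subseteq> cliques r V E"
      using r by (auto simp: cliques_def)
  qed
  then show ?thesis
    using r by (simp add: card_image)
qed

lemma card_clique_neighbours_le:
  assumes "finite V"
  shows "card (clique_neighbours r V E x) \<le> card (neighbours V E x)"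
proof (rule card_mono)
  show "finite (neighbours V E x)"
    using assms by (simp add: neighbours_def)
  show "clique_neighbours r V E x \<subseteq> neighbours V E x"
    by (auto simp: clique_neighbours_def neighbours_def cliques_def)
qed

lemma clique_neighbours_nonempty_card_neighbours_ge:
  assumes "finite V" "clique_neighbours r V E x \<noteq> {}"
  shows "r - 1 \<le> card (neighbours V E x)"
proof -
  obtain S where S: "S \<in> cliques r V E" "x \<in> S"
    using assms(2) by (auto simp: clique_neighbours_def)
  have "card (S - {x}) \<le> card (neighbours V E x)"
    using clique_minus_subset_neighbours(1)[OF S assms(1)] assms(1)
    by (intro card_mono) (simp_all add: neighbours_def)
  then show ?thesis
    using clique_minus_subset_neighbours(2)[OF S assms(1)] by simp
qed

lemma card_neighbours_le_vertex_degree: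
  assumes "simple_graph V E"
  shows "card (neighbours V E x) \<le> vertex_degree E x"
  unfolding vertex_degree_def
proof (rule card_inj_on_le[where f = "\<lambda>y. {x, y}"])
  show "inj_on (\<lambda>y. {x, y}) (neighbours V E x)"
    by (rule inj_onI) (metis doubleton_eq_iff)
  show "(\<lambda>y. {x, y}) ` neighbours V E x \<subseteq> {e \<in> E. x \<in> e}"
    by (auto simp: neighbours_def)
  show "finite {e \<in> E. x \<in> e}"
    using finite_edges[OF assms] by simp
qed

lemma heavy_vertices_subset_vertex_degree_gt:
  assumes "simple_graph V E"
  shows "heavy_vertices r V E ((m choose (r - 1)) + 1) \<subseteq> {x \<in> V. m < vertex_degree E x}"
proof
  fix x assume x: "x \<in> heavy_vertices r V E ((m choose (r - 1)) + 1)"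
  have "\<not> vertex_degree E x \<le> m"
  proof
    assume "vertex_degree E x \<le> m"
    then have "card (neighbours V E x) choose (r - 1) \<le> m choose (r - 1)"
      by (intro binomial_right_mono) (meson le_trans card_neighbours_le_vertex_degree[OF assms])
    moreover have "clique_degree r V E x \<le> card (neighbours V E x) choose (r - 1)"
      using assms by (intro clique_degree_le_choose) (simp add: simple_graph_def)
    ultimately show False
      using x by (simp add: heavy_vertices_def)
  qed
  then show "x \<in> {x \<in> V. m < vertex_degree E x}"
    using x by (auto simp: heavy_vertices_def)
qed

lemma sum_vertex_degree:
  assumes "simple_graph V E"
  shows "(\<Sum>x\<in>V. vertex_degree E x) = 2 * card E"
proof -
  have fin: "finite V" and EV: "\<And>e. e \<in> E \<Longrightarrow> e \<subseteq> V \<and> card e = 2"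
    using assms by (auto simp: simple_graph_def)
  have "(\<Sum>x\<in>V. vertex_degree E x) = (\<Sum>x\<in>V. \<Sum>e\<in>E. if x \<in> e then 1 else 0)"
    using finite_edges[OF assms] by (simp add: vertex_degree_def sum.If_cases Int_def)
  also have "\<dots> = (\<Sum>e\<in>E. \<Sum>x\<in>V. if x \<in> e then 1 else 0)"
    by (rule sum.swap)
  also have "\<dots> = (\<Sum>e\<in>E. 2)"
  proof (rule sum.cong)
    fix e assume "e \<in> E"
    then have "V \<inter> e = e" "card e = 2" using EV by auto
    then show "(\<Sum>x\<in>V. if x \<in> e then 1 else 0) = (2::nat)"
      using fin by (simp add: sum.If_cases)
  qed simp
  finally show ?thesis by simp
qed

lemma card_mult_le_sum_vertex_degree:
  assumes "simple_graph V E" "A \<subseteq> V" "\<And>x. x \<in> A \<Longrightarrow> m \<le> vertex_degree E x"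
  shows "m * card A \<le> 2 * card E"
proof -
  have fin: "finite V" using assms by (simp add: simple_graph_def)
  have "m * card A = (\<Sum>x\<in>A. m)" by simp
  also have "\<dots> \<le> (\<Sum>x\<in>A. vertex_degree E x)" using assms by (intro sum_mono) auto
  also have "\<dots> \<le> (\<Sum>x\<in>V. vertex_degree E x)" using fin assms by (intro sum_mono2) auto
  also have "\<dots> = 2 * card E" by (rule sum_vertex_degree[OF assms(1)])
  finally show ?thesis .
qed

lemma twice_card_edges_le:
  assumes "avg_degree V E \<le> real d" "V \<noteq> {}" "finite V"
  shows "2 * card E \<le> d * card V"
proof -
  have "real (2 * card E) \<le> real (d * card V)"
    using assms by (simp add: avg_degree_def divide_le_eq card_gt_0_iff)
  then show ?thesis by (simp only: of_nat_le_iff)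
qed

section \<open>Arithmetic consequences of the bound on \<open>k\<close>\<close>

lemma antimono_shift_iterate:
  fixes f :: "nat \<Rightarrow> nat"
  assumes "antimono f" "1 \<le> \<Delta>" "\<And>t. f t \<le> f (t + \<Delta>) + e"
  shows "f s \<le> f (s + j) + j * e"
proof (induction j)
  case (Suc j)
  have "f (s + j + \<Delta>) \<le> f (s + Suc j)"
    using assms(1,2) by (simp add: antimonoD)
  then show ?case
    using Suc assms(3)[of "s + j"] by simp
qed simp

lemma missing_cards_bound_nat:
  fixes n k d C :: nat
  assumes "real k \<le> (real n / 2 - 1) / (1 + real C) - real d - 5"
  shows "2 * (C + 1) * (k + d + 5) + 2 \<le> n"
proof -
  have "real k + real d + 5 \<le> (real n / 2 - 1) / (1 + real C)"
    using assms by linarith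
  then have "(1 + real C) * (real k + real d + 5) \<le> real n / 2 - 1"
    by (simp add: pos_le_divide_eq mult.commute add_pos_nonneg)
  then have "real (2 * (C + 1) * (k + d + 5) + 2) \<le> real n"
    by (simp add: algebra_simps)
  then show ?thesis
    by (simp only: of_nat_le_iff)
qed

lemma missing_cards_bound_degree_threshold:
  fixes n k d r :: nat
  assumes "2 * ((2 * (d + 1) choose (r - 1)) + 1) * (k + d + 5) + 2 \<le> n" and "2 \<le> r"
  shows "d * n < max (d + 5) (r - 1) * (n - k)"
proof -
  define C where "C = 2 * (d + 1) choose (r - 1)"
  have bound: "2 * (C + 1) * (k + d + 5) + 2 \<le> n"
    using assms(1) by (simp add: C_def)
  have "2 * (k + d + 5) + 2 \<le> 2 * (C + 1) * (k + d + 5) + 2"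
    by simp
  then have "2 * (k + d + 5) + 2 \<le> n"
    using bound by (rule le_trans)
  then obtain m where n: "n = k + m" and m: "k + 2 * d + 12 \<le> m"
    by (intro that[of "n - k"]) auto
  show ?thesis
  proof (cases "r - 1 \<le> 2 * d + 1")
    case True
    then have "2 * d + 2 \<le> C"
      using upper_le_binomial[of "r - 1" "2 * (d + 1)"] assms(2) by (simp add: C_def)
    then have "(d + 5) * (k + 1) \<le> 2 * (C + 1) * (k + d + 5)"
      by (intro mult_le_mono) simp_all
    then have "d * n < (d + 5) * (n - k)"
      using bound n by (simp add: algebra_simps)
    also have "\<dots> \<le> max (d + 5) (r - 1) * (n - k)"
      by (intro mult_le_mono1) simp
    finally show ?thesis .
  next
    case False
    have "d * k \<le> d * m"
      using m by simp
    moreover have "d * n = d * k + d * m" "(2 * d + 2) * (n - k) = 2 * (d * m) + 2 * m"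
      using n by (simp_all add: algebra_simps)
    ultimately have "d * n < (2 * d + 2) * (n - k)"
      using m by linarith
    also have "\<dots> \<le> max (d + 5) (r - 1) * (n - k)"
      using False by (intro mult_le_mono1) simp
    finally show ?thesis .
  qed
qed

lemma missing_cards_bound_count:
  fixes n k d C e X :: nat
  assumes bound: "2 * (C + 1) * (k + d + 5) + 2 \<le> n"
    and "e \<le> k + d + 5" and "(2 * d + 3) * X \<le> d * n"
  shows "X + C * e < n - k"
proof -
  have "(2 * d + 3) * (2 * X) \<le> 2 * (d * n)"
    using assms(3) by simp
  also have "\<dots> < (2 * d + 3) * n"
    using bound by simp
  finally have "2 * X < n"
    by (rule mult_less_cancel1[THEN iffD1, THEN conjunct2])
  moreover have "C * e \<le> C * (k + d + 5)"
    using assms(2) by simp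
  ultimately show ?thesis
    using bound by (simp add: algebra_simps)
qed

section \<open>Two graphs sharing \<open>n - k\<close> cards\<close>

locale partial_deck =
  fixes VG :: "'a set" and EG :: "'a set set" and VH :: "'b set" and EH :: "'b set set"
    and n k :: nat and u :: "nat \<Rightarrow> 'a" and w :: "nat \<Rightarrow> 'b"
  assumes G: "simple_graph VG EG" and card_VG: "card VG = n"
    and H: "simple_graph VH EH" and card_VH: "card VH = n"
    and u_in: "\<forall>i\<in>{1..n - k}. u i \<in> VG" and u_inj: "inj_on u {1..n - k}"
    and w_in: "\<forall>i\<in>{1..n - k}. w i \<in> VH" and w_inj: "inj_on w {1..n - k}"
    and cards: "\<forall>i\<in>{1..n - k}. graph_iso (del_vert_V VG (u i)) (del_vert_E EG (u i))
                                            (del_vert_V VH (w i)) (del_vert_E EH (w i))"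
begin

lemma finite_VG: "finite VG" and finite_VH: "finite VH"
  using G H by (simp_all add: simple_graph_def)

lemma clique_degree_shift:
  assumes "i \<in> {1..n - k}"
  shows "clique_degree r VG EG (u i) + card (cliques r VH EH)
           = clique_degree r VH EH (w i) + card (cliques r VG EG)"
  using card_cliques_del_vert[OF finite_VG, of r "u i" EG]
    card_cliques_del_vert[OF finite_VH, of r "w i" EH]
    graph_iso_card_cliques[OF cards[rule_format, OF assms], of r]
  by linarith

lemma card_heavy_card_indices_le:
  "card {i \<in> {1..n - k}. t \<le> clique_degree r VG EG (u i)} \<le> card (heavy_vertices r VG EG t)"
proof (rule card_inj_on_le[where f = u])
  show "inj_on u {i \<in> {1..n - k}. t \<le> clique_degree r VG EG (u i)}"
    using u_inj by (rule inj_on_subset) auto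
  show "u ` {i \<in> {1..n - k}. t \<le> clique_degree r VG EG (u i)} \<subseteq> heavy_vertices r VG EG t"
    using u_in by (auto simp: heavy_vertices_def)
  show "finite (heavy_vertices r VG EG t)"
    using finite_VG by (simp add: heavy_vertices_def)
qed

lemma card_heavy_vertices_le_card_indices:
  "card (heavy_vertices r VH EH t) \<le> card {i \<in> {1..n - k}. t \<le> clique_degree r VH EH (w i)} + k"
proof -
  let ?I = "{1..n - k}"
  let ?J = "{i \<in> ?I. t \<le> clique_degree r VH EH (w i)}"
  have "card (VH - w ` ?I) = n - (n - k)"
    using w_in w_inj finite_VH card_VH by (subst card_Diff_subset) (auto simp: card_image)
  then have missing: "card (VH - w ` ?I) \<le> k"
    by simp
  have "heavy_vertices r VH EH t \<subseteq> w ` ?J \<union> (VH - w ` ?I)"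
    by (auto simp: heavy_vertices_def)
  then have "card (heavy_vertices r VH EH t) \<le> card (w ` ?J \<union> (VH - w ` ?I))"
    using finite_VH by (intro card_mono) auto
  also have "\<dots> \<le> card (w ` ?J) + card (VH - w ` ?I)"
    by (rule card_Un_le)
  also have "\<dots> \<le> card ?J + k"
    using missing card_image_le[of ?J w] by simp
  finally show ?thesis .
qed

lemma card_heavy_card_indices_step:
  assumes i: "i \<in> {1..n - k}"
  shows "card {j \<in> {1..n - k}. t \<le> clique_degree r VG EG (u j)}
           \<le> card {j \<in> {1..n - k}. t \<le> clique_degree r VH EH (w j)}
             + (k + card (clique_neighbours r VG EG (u i)) + 1)"
proof -
  let ?G' = "del_vert_V VG (u i)" and ?EG' = "del_vert_E EG (u i)"
  let ?H' = "del_vert_V VH (w i)" and ?EH' = "del_vert_E EH (w i)"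
  have "card {j \<in> {1..n - k}. t \<le> clique_degree r VG EG (u j)} \<le> card (heavy_vertices r VG EG t)"
    by (rule card_heavy_card_indices_le)
  also have "\<dots> \<le> card (heavy_vertices r ?G' ?EG' t) + card (clique_neighbours r VG EG (u i)) + 1"
    using finite_VG by (rule card_heavy_vertices_le_del_vert)
  also have "card (heavy_vertices r ?G' ?EG' t) = card (heavy_vertices r ?H' ?EH' t)"
    using cards i by (simp add: graph_iso_card_heavy_vertices)
  also have "\<dots> \<le> card (heavy_vertices r VH EH t)"
    using finite_VH by (rule card_heavy_vertices_del_vert_le)
  also have "\<dots> \<le> card {j \<in> {1..n - k}. t \<le> clique_degree r VH EH (w j)} + k"
    by (rule card_heavy_vertices_le_card_indices)
  finally show ?thesis
    by simp
qed

lemma obtain_small_clique_neighbours: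
  assumes "2 * card EG \<le> d * n" and "d * n < max (d + 5) (r - 1) * (n - k)"
  obtains i where "i \<in> {1..n - k}" and "card (clique_neighbours r VG EG (u i)) \<le> d + 4"
proof -
  let ?m = "max (d + 5) (r - 1)"
  have "\<exists>i\<in>{1..n - k}. card (clique_neighbours r VG EG (u i)) \<le> d + 4"
  proof (rule ccontr)
    assume none: "\<not> ?thesis"
    have "?m \<le> vertex_degree EG x" if "x \<in> u ` {1..n - k}" for x
    proof -
      have large: "d + 4 < card (clique_neighbours r VG EG x)"
        using none that by auto
      then have "r - 1 \<le> card (neighbours VG EG x)"
        using finite_VG by (intro clique_neighbours_nonempty_card_neighbours_ge) auto
      moreover have "d + 5 \<le> card (neighbours VG EG x)"
        using large card_clique_neighbours_le[OF finite_VG, of r EG x] by simp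
      ultimately show ?thesis
        using card_neighbours_le_vertex_degree[OF G, of x] by simp
    qed
    then have "?m * card (u ` {1..n - k}) \<le> 2 * card EG"
      using u_in by (intro card_mult_le_sum_vertex_degree[OF G]) auto
    then show False
      using assms u_inj by (simp add: card_image)
  qed
  then show ?thesis
    using that by blast
qed

lemma card_indices_le_high_degree_vertices:
  assumes excess: "card (cliques r VG EG) = card (cliques r VH EH) + \<Delta>" and "1 \<le> \<Delta>"
    and i: "i \<in> {1..n - k}"
  shows "n - k \<le> card {x \<in> VG. m < vertex_degree EG x}
                  + (m choose (r - 1)) * (k + card (clique_neighbours r VG EG (u i)) + 1)"
proof -
  let ?C = "m choose (r - 1)" and ?e = "k + card (clique_neighbours r VG EG (u i)) + 1"
  define f where "f t = card {j \<in> {1..n - k}. t \<le> clique_degree r VG EG (u j)}" for t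
  have shift: "clique_degree r VG EG (u j) = clique_degree r VH EH (w j) + \<Delta>"
    if "j \<in> {1..n - k}" for j
    using clique_degree_shift[OF that, of r] excess by simp
  have step: "f t \<le> f (t + \<Delta>) + ?e" for t
  proof -
    have "{j \<in> {1..n - k}. t \<le> clique_degree r VH EH (w j)}
            = {j \<in> {1..n - k}. t + \<Delta> \<le> clique_degree r VG EG (u j)}"
      using shift by auto
    then show ?thesis
      using card_heavy_card_indices_step[OF i, of t r] by (simp add: f_def)
  qed
  have "antimono f"
    unfolding f_def by (intro antimonoI card_mono) auto
  then have "f 1 \<le> f (1 + ?C) + ?C * ?e"
    using \<open>1 \<le> \<Delta>\<close> step by (rule antimono_shift_iterate)
  moreover have "{j \<in> {1..n - k}. 1 \<le> clique_degree r VG EG (u j)} = {1..n - k}"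
    using shift \<open>1 \<le> \<Delta>\<close> by fastforce
  then have "f 1 = n - k"
    by (simp add: f_def)
  moreover have "f (1 + ?C) \<le> card (heavy_vertices r VG EG (?C + 1))"
    using card_heavy_card_indices_le by (simp add: f_def add.commute)
  moreover have "\<dots> \<le> card {x \<in> VG. m < vertex_degree EG x}"
    using heavy_vertices_subset_vertex_degree_gt[OF G] finite_VG by (intro card_mono) auto
  ultimately show ?thesis
    by linarith
qed

lemma card_cliques_le:
  assumes deg: "avg_degree VG EG \<le> real d" and "2 \<le> r"
    and bound: "2 * ((2 * (d + 1) choose (r - 1)) + 1) * (k + d + 5) + 2 \<le> n"
  shows "card (cliques r VG EG) \<le> card (cliques r VH EH)"
proof (rule ccontr)
  let ?C = "2 * (d + 1) choose (r - 1)"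
  define \<Delta> where "\<Delta> = card (cliques r VG EG) - card (cliques r VH EH)"
  assume "\<not> ?thesis"
  then have excess: "card (cliques r VG EG) = card (cliques r VH EH) + \<Delta>" "1 \<le> \<Delta>"
    by (simp_all add: \<Delta>_def)
  have "VG \<noteq> {}"
    using card_VG bound by auto
  then have edges: "2 * card EG \<le> d * n"
    using twice_card_edges_le[OF deg _ finite_VG] card_VG by simp
  obtain i where i: "i \<in> {1..n - k}" and small: "card (clique_neighbours r VG EG (u i)) \<le> d + 4"
    using obtain_small_clique_neighbours[OF edges missing_cards_bound_degree_threshold[OF bound \<open>2 \<le> r\<close>]] .
  define X where "X = card {x \<in> VG. 2 * (d + 1) < vertex_degree EG x}"
  have "(2 * d + 3) * X \<le> 2 * card EG"
    unfolding X_def by (intro card_mult_le_sum_vertex_degree[OF G]) auto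
  then have "X + ?C * (k + card (clique_neighbours r VG EG (u i)) + 1) < n - k"
    using edges small by (intro missing_cards_bound_count[OF bound]) simp_all
  then show False
    using card_indices_le_high_degree_vertices[OF excess i, of "2 * (d + 1)"] by (simp add: X_def)
qed

end

theorem theorem2p3:
  fixes d r n k :: nat
    and VG :: "'a set" and EG :: "'a set set"
    and VH :: "'b set" and EH :: "'b set set"
    and u :: "nat \<Rightarrow> 'a" and w :: "nat \<Rightarrow> 'b"
  assumes n3: "n \<ge> 3"
    and kbound: "real k \<le> (real n / 2 - 1) / (1 + real ((2 * (d + 1)) choose (r - 1))) - real d - 5"
    and G: "simple_graph VG EG" and cardG: "card VG = n"
    and H: "simple_graph VH EH" and cardH: "card VH = n"
    and degG: "avg_degree VG EG \<le> real d"
    and degH: "avg_degree VH EH \<le> real d"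
    and u_in: "\<forall>i\<in>{1..n - k}. u i \<in> VG" and u_inj: "inj_on u {1..n - k}"
    and w_in: "\<forall>i\<in>{1..n - k}. w i \<in> VH" and w_inj: "inj_on w {1..n - k}"
    and cards: "\<forall>i\<in>{1..n - k}. graph_iso (del_vert_V VG (u i)) (del_vert_E EG (u i))
                                             (del_vert_V VH (w i)) (del_vert_E EH (w i))"
  shows "card (cliques r VG EG) = card (cliques r VH EH)"
proof (cases "r \<le> 1")
  case True
  then show ?thesis
    using G H cardG cardH by (simp add: card_cliques_trivial simple_graph_def)
next
  case False
  have bound: "2 * ((2 * (d + 1) choose (r - 1)) + 1) * (k + d + 5) + 2 \<le> n"
    using kbound by (rule missing_cards_bound_nat)
  interpret GH: partial_deck VG EG VH EH n k u w
    using G cardG H cardH u_in u_inj w_in w_inj cards by unfold_locales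
  interpret HG: partial_deck VH EH VG EG n k w u
    using G cardG H cardH u_in u_inj w_in w_inj cards graph_iso_sym by unfold_locales blast+
  show ?thesis
    using False GH.card_cliques_le[OF degG _ bound] HG.card_cliques_le[OF degH _ bound] by simp
qed

end
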